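(* Let $\delta\in L^2(X,\mu)$ and $k\ge1$. For $r\in\widehat X$ define $M^{(k)}(r)=\prod_{0\le\ell<k}M\big(P_{2\mathbf{q}}^{\ell}(r)\big)$. Then for every $s\in\widehat X$, \[ \widehat{(\mathcal{L}^k\delta)}(s)=\sum_{r\in P_{2\mathbf{q}}^{-k}(s)}M^{(k)}(r)\,\hat\delta(r), \] where $P_{2\mathbf{q}}^{-k}(s)=\{r\in\widehat X: P_{2\mathbf{q}}^k(r)=s\}$ (a finite set).
   Context: $X=\mathbb{Z}_2$ is the ring of $2$-adic integers, realized as $\{(x_n)_{n\ge0}\in\prod_n\mathbb{Z}/2^n\mathbb{Z}: x_{n+1}\equiv x_n \pmod{2^n}\}$ with coordinatewise operations and projections $\pi_n(\mathbf{x})=x_n$; $\mu$ is its normalized Haar measure. $\widehat X=\mathbb{Q}[1/2]/\mathbb{Z}$. For $\mathbf{x}\in X$, $P_{\mathbf{x}}:\widehat X\to\widehat X$ is $P_{\mathbf{x}}(\frac{a}{2^n}+\mathbb{Z})=\frac{\pi_n(\mathbf{x})a}{2^n}+\mathbb{Z}$. With $e(\alpha)=\exp(2\pi i\alpha)$, the characters are $\chi_r(\mathbf{x})=e(P_{\mathbf{x}}(r))$ for $r\in\widehat X$; they form an orthonormal basis of $L^2(X,\mu)$, and $\hat\delta(r)=\int_X\delta(\mathbf{x})\overline{\chi_r(\mathbf{x})}\,d\mu(\mathbf{x})$ is the Fourier coefficient, so $\delta=\sum_r\hat\delta(r)\chi_r$. Let $\mathbf{3}=(3)_{n\ge0}$,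 $\mathbf{2}=(2)_{n\ge0}\in X$, and let $\mathbf{q}\in X$ be the multiplicative inverse of $\mathbf{3}$; write $2\mathbf{q}=\mathbf{2}\mathbf{q}$. The operator $\mathcal{L}$ acts on functions $\delta:X\to\mathbb{C}$ by $(\mathcal{L}\delta)(\mathbf{x})=\sum_{j=0}^{2}c_j\,\delta(2\mathbf{q}\mathbf{x}-j\mathbf{q})$ with $c_0=c_2=1/3$, $c_1=-1/3$. Finally $M(r)=\sum_{j=0}^2c_j\chi_r(-j\mathbf{q})=\frac13\big(1-e(-P_{\mathbf{q}}(r))+e(-2P_{\mathbf{q}}(r))\big)$. *)

theory Defs
  imports "HOL-Probability.Probability"
begin

section \<open>The 2-adic integers as compatible sequences\<close>

type_synonym z2 = "nat \<Rightarrow> int"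

definition Z2 :: "z2 set" where
  "Z2 = {x. (\<forall>n. 0 \<le> x n \<and> x n < 2 ^ n) \<and> (\<forall>n. x (Suc n) mod 2 ^ n = x n)}"

definition z2_const :: "int \<Rightarrow> z2" where
  "z2_const c = (\<lambda>n. c mod 2 ^ n)"

definition z2_add :: "z2 \<Rightarrow> z2 \<Rightarrow> z2" where
  "z2_add x y = (\<lambda>n. (x n + y n) mod 2 ^ n)"

definition z2_mul :: "z2 \<Rightarrow> z2 \<Rightarrow> z2" where
  "z2_mul x y = (\<lambda>n. (x n * y n) mod 2 ^ n)"

definition z2_neg :: "z2 \<Rightarrow> z2" where
  "z2_neg x = (\<lambda>n. (- x n) mod 2 ^ n)"

definition z2_sub :: "z2 \<Rightarrow> z2 \<Rightarrow> z2" where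
  "z2_sub x y = (\<lambda>n. (x n - y n) mod 2 ^ n)"

definition z2_three :: z2 where "z2_three = z2_const 3"
definition z2_two :: z2 where "z2_two = z2_const 2"

definition z2_q :: z2 where
  "z2_q = (THE y. y \<in> Z2 \<and> z2_mul z2_three y = z2_const 1)"

definition z2_2q :: z2 where "z2_2q = z2_mul z2_two z2_q"

text \<open>Normalized Haar measure: image of the fair coin-flip product measure under
  binary expansion (b_i) \<mapsto> (sum_{i<n} b_i 2^i)_n.\<close>
definition coin_flips :: "(nat \<Rightarrow> bool) measure" where
  "coin_flips = PiM UNIV (\<lambda>_. measure_pmf (pmf_of_set {False, True}))"

definition bits_to_z2 :: "(nat \<Rightarrow> bool) \<Rightarrow> z2" where
  "bits_to_z2 b = (\<lambda>n. \<Sum>i<n. if b i then 2 ^ i else 0)"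

definition haar :: "z2 measure" where
  "haar = distr coin_flips (PiM UNIV (\<lambda>_. count_space UNIV)) bits_to_z2"

section \<open>Dual group Q[1/2]/Z, represented by dyadic rationals in [0,1)\<close>

definition Xhat :: "rat set" where
  "Xhat = {r. 0 \<le> r \<and> r < 1 \<and> (\<exists>n::nat. r * 2 ^ n \<in> \<int>)}"

definition dyad_level :: "rat \<Rightarrow> nat" where
  "dyad_level r = (LEAST n. r * 2 ^ n \<in> \<int>)"

text \<open>P_x(a/2^n + Z) = pi_n(x) a / 2^n + Z\<close>
definition Pmap :: "z2 \<Rightarrow> rat \<Rightarrow> rat" where
  "Pmap x r = frac (of_int (x (dyad_level r)) * r)"

definition e :: "real \<Rightarrow> complex" where
  "e a = exp (2 * of_real pi * \<i> * of_real a)"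

definition chi :: "rat \<Rightarrow> z2 \<Rightarrow> complex" where
  "chi r x = e (of_rat (Pmap x r))"

definition fourier :: "(z2 \<Rightarrow> complex) \<Rightarrow> rat \<Rightarrow> complex" where
  "fourier \<delta> r = integral\<^sup>L haar (\<lambda>x. \<delta> x * cnj (chi r x))"

definition coef :: "nat \<Rightarrow> complex" where
  "coef j = (if j = 1 then - 1 / 3 else 1 / 3)"

definition Lop :: "(z2 \<Rightarrow> complex) \<Rightarrow> (z2 \<Rightarrow> complex)" where
  "Lop \<delta> x = (\<Sum>j<3. coef j * \<delta> (z2_sub (z2_mul z2_2q x) (z2_mul (z2_const (int j)) z2_q)))"

definition Mfun :: "rat \<Rightarrow> complex" where
  "Mfun r = (\<Sum>j<3. coef j * chi r (z2_neg (z2_mul (z2_const (int j)) z2_q)))"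

definition Mk :: "nat \<Rightarrow> rat \<Rightarrow> complex" where
  "Mk k r = (\<Prod>l<k. Mfun ((Pmap z2_2q ^^ l) r))"

end

theory Submission
  imports Defs
begin

(*
  Write T a x = 2q x - a, so that L f = sum_j c_j (f o T (j q)).  Since 2q is twice a unit,
  T a maps Z_2 bijectively onto the class E_a of y with y = a (mod 2), and therefore pushes the
  Haar measure forward to 2 1_{E_a} mu.  Dually, P_2q r = s has exactly the two solutions
  r = 3s/2 and r = 3s/2 + 1/2 (mod 1), and G(y) = sum_{P_2q r = s} chi_r(-a) conj(chi_r(y))
  equals 2 conj(chi_s(x)) at y = T a x and vanishes off E_a, where its two terms cancel because
  the two solutions differ by 1/2.  Changing variables gives the Fourier coefficient of f o T a at s as
  sum_{P_2q r = s} chi_r(-a) f^(r), hence the one-step formula with weight M; the k-step formula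
  follows by summing over the disjoint fibres of P_2q^k.
*)

section \<open>Compatible sequences\<close>

lemma Z2_coord_bounds: "x \<in> Z2 \<Longrightarrow> 0 \<le> x n \<and> x n < 2 ^ n"
  by (simp add: Z2_def)

lemma Z2_coord_mod [simp]: "x \<in> Z2 \<Longrightarrow> x n mod 2 ^ n = x n"
  using Z2_coord_bounds[of x n] by simp

lemma Z2_coord_Suc_mod: "x \<in> Z2 \<Longrightarrow> x (Suc n) mod 2 ^ n = x n"
  by (simp add: Z2_def)

lemma Z2_coord_mod_le:
  assumes x: "x \<in> Z2" and "i \<le> n"
  shows "x n mod 2 ^ i = x i"
  using \<open>i \<le> n\<close>
proof (induction n rule: dec_induct)
  case (step n)
  have "x (Suc n) mod 2 ^ i = x (Suc n) mod 2 ^ n mod 2 ^ i"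
    using \<open>i \<le> n\<close> by (simp add: mod_mod_cancel le_imp_power_dvd)
  then show ?case using step.IH Z2_coord_Suc_mod[OF x] by simp
qed (simp add: x)

lemma Z2I:
  assumes "\<And>n. x n = y n mod 2 ^ n" and "\<And>n. y (Suc n) mod 2 ^ n = y n mod 2 ^ n"
  shows "x \<in> Z2"
  using assms unfolding Z2_def by (auto simp: mod_mod_cancel le_imp_power_dvd)

lemma z2_const_in_Z2 [simp]: "z2_const c \<in> Z2"
  by (rule Z2I[where y = "\<lambda>_. c"]) (auto simp: z2_const_def)

lemma z2_mul_in_Z2 [simp]: "x \<in> Z2 \<Longrightarrow> y \<in> Z2 \<Longrightarrow> z2_mul x y \<in> Z2"
  by (rule Z2I[where y = "\<lambda>n. x n * y n"]) (simp add: z2_mul_def, metis Z2_coord_Suc_mod mod_mult_eq)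

lemma z2_sub_in_Z2 [simp]: "x \<in> Z2 \<Longrightarrow> y \<in> Z2 \<Longrightarrow> z2_sub x y \<in> Z2"
  by (rule Z2I[where y = "\<lambda>n. x n - y n"]) (simp add: z2_sub_def, metis Z2_coord_Suc_mod mod_diff_eq)

lemma z2_neg_in_Z2 [simp]: "x \<in> Z2 \<Longrightarrow> z2_neg x \<in> Z2"
  by (rule Z2I[where y = "\<lambda>n. - x n"]) (simp add: z2_neg_def, metis Z2_coord_Suc_mod mod_minus_eq)

lemma three_dvd_one_minus_four_power: "(3::int) dvd 1 - 4 ^ n"
proof (induction n)
  case (Suc n)
  have "(1::int) - 4 ^ Suc n = 4 * (1 - 4 ^ n) - 3" by simp
  then show ?case using Suc by presburger
qed simp

lemma z2_inverse_of_three_exists: "\<exists>y \<in> Z2. z2_mul z2_three y = z2_const 1"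
proof -
  \<comment> \<open>\<open>(1 - 4^n) / 3\<close> is an integer congruent to \<open>1/3\<close> modulo \<open>4^n\<close>.\<close>
  define w where "w n = (1 - 4 ^ n) div (3::int)" for n
  have three_w: "3 * w n = 1 - 4 ^ n" for n
    unfolding w_def by (rule dvd_mult_div_cancel[OF three_dvd_one_minus_four_power])
  have pow_dvd: "(2::int) ^ n dvd 4 ^ n" for n
    by (rule dvd_power_same) simp
  define y where "y n = w n mod 2 ^ n" for n
  have "y \<in> Z2"
  proof (rule Z2I[where y = w])
    show "w (Suc n) mod 2 ^ n = w n mod 2 ^ n" for n
    proof -
      have "w (Suc n) = w n - 4 ^ n" using three_w[of n] three_w[of "Suc n"] by simp
      then show ?thesis using pow_dvd[of n] by (simp add: mod_eq_dvd_iff)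
    qed
  qed (simp add: y_def)
  moreover have "z2_mul z2_three y = z2_const 1"
  proof
    fix n
    have "(2::int) ^ n dvd 3 * w n - 1" using three_w[of n] pow_dvd[of n] by simp
    then have "(3 * w n) mod 2 ^ n = 1 mod 2 ^ n" by (simp only: mod_eq_dvd_iff)
    then show "z2_mul z2_three y n = z2_const 1 n"
      by (simp add: z2_mul_def z2_three_def z2_const_def y_def mod_mult_eq)
  qed
  ultimately show ?thesis by blast
qed

lemma z2_inverse_of_three_unique:
  assumes "y \<in> Z2" "z2_mul z2_three y = z2_const 1" "y' \<in> Z2" "z2_mul z2_three y' = z2_const 1"
  shows "y = y'"
proof
  fix n
  have "(3 * y n) mod 2 ^ n = (3 * y' n) mod 2 ^ n"
    using fun_cong[OF assms(2), of n] fun_cong[OF assms(4), of n]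
    by (simp add: z2_mul_def z2_three_def z2_const_def mod_mult_left_eq)
  then have "(2::int) ^ n dvd 3 * (y n - y' n)"
    by (simp only: mod_eq_dvd_iff right_diff_distrib)
  moreover have "coprime ((2::int) ^ n) 3" by simp
  ultimately have "(2::int) ^ n dvd y n - y' n" using coprime_dvd_mult_right_iff by blast
  moreover have "\<bar>y n - y' n\<bar> < 2 ^ n"
    using Z2_coord_bounds[OF assms(1), of n] Z2_coord_bounds[OF assms(3), of n] by auto
  ultimately show "y n = y' n"
    using dvd_imp_le_int[of "y n - y' n" "2 ^ n"] by fastforce
qed

lemma z2_q_in_Z2 [simp]: "z2_q \<in> Z2"
  and z2_three_mul_q: "z2_mul z2_three z2_q = z2_const 1"
proof -
  have "z2_q \<in> Z2 \<and> z2_mul z2_three z2_q = z2_const 1"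
    unfolding z2_q_def
    by (rule theI'[of "\<lambda>y. y \<in> Z2 \<and> z2_mul z2_three y = z2_const 1"])
       (use z2_inverse_of_three_exists z2_inverse_of_three_unique in blast)
  then show "z2_q \<in> Z2" "z2_mul z2_three z2_q = z2_const 1" by auto
qed

lemma three_mul_z2_q_coord: "\<exists>t. 3 * of_int (z2_q n) = (1 + 2 ^ n * of_int t :: 'a :: comm_ring_1)"
proof -
  have "(3 * z2_q n) mod 2 ^ n = 1 mod 2 ^ n"
    using fun_cong[OF z2_three_mul_q, of n]
    by (simp add: z2_mul_def z2_three_def z2_const_def mod_mult_left_eq)
  then have "(2::int) ^ n dvd 3 * z2_q n - 1" by (simp only: mod_eq_dvd_iff)
  then obtain t where "3 * z2_q n = 1 + 2 ^ n * t" by (auto simp: algebra_simps)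
  then have "of_int (3 * z2_q n) = (of_int (1 + 2 ^ n * t) :: 'a)" by simp
  then show ?thesis by auto
qed

lemma z2_2q_in_Z2 [simp]: "z2_2q \<in> Z2"
  by (simp add: z2_2q_def z2_two_def)

lemma z2_2q_coord_mod: "z2_2q n mod 2 ^ n = (2 * z2_q n) mod 2 ^ n"
  by (simp add: z2_2q_def z2_two_def z2_mul_def z2_const_def mod_mult_left_eq)

section \<open>Characters and dyadic rationals\<close>

lemma e_add: "e (a + b) = e a * e b"
  by (simp add: e_def distrib_left exp_add)

lemma e_of_int: "e (of_int k) = 1"
proof -
  have "e (of_int k) = exp (complex_of_real (2 * of_int k * pi) * \<i>)"
    by (simp add: e_def mult.commute mult.left_commute)
  also have "\<dots> = 1" by (rule exp_integer_2pi) simp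
  finally show ?thesis .
qed

lemma e_half: "e (1/2) = -1"
proof -
  have "e (1/2) = exp (complex_of_real ((2 * 0 + 1) * pi) * \<i>)"
    by (simp add: e_def mult.commute mult.left_commute)
  also have "\<dots> = -1" by (rule exp_integer_2pi_plus1) simp
  finally show ?thesis .
qed

lemma cnj_e: "cnj (e a) = e (- a)"
  by (simp add: e_def exp_cnj)

lemma norm_e: "cmod (e a) = 1"
proof -
  have "e a = exp (\<i> * complex_of_real (2 * pi * a))"
    by (simp add: e_def mult.commute mult.left_commute)
  then show ?thesis by (simp only: norm_exp_i_times)
qed

definition e_rat :: "rat \<Rightarrow> complex" where
  "e_rat q = e (of_rat q)"

lemma e_rat_add: "e_rat (a + b) = e_rat a * e_rat b"
  by (simp add: e_rat_def of_rat_add e_add)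

lemma cnj_e_rat: "cnj (e_rat a) = e_rat (- a)"
  by (simp add: e_rat_def cnj_e of_rat_minus)

lemma e_rat_Ints: "a \<in> \<int> \<Longrightarrow> e_rat a = 1"
  by (auto simp: e_rat_def e_of_int elim!: Ints_cases)

lemma e_rat_cong: "a - b \<in> \<int> \<Longrightarrow> e_rat a = e_rat b"
  by (metis diff_add_cancel e_rat_add e_rat_Ints mult_1)

lemma e_rat_odd_half: "odd k \<Longrightarrow> e_rat (of_int k / 2) = -1"
proof -
  assume "odd k"
  then obtain t where "k = 2 * t + 1" by (auto elim!: oddE)
  then have "e_rat (of_int k / 2) = e_rat (1/2)"
    by (intro e_rat_cong) (simp add: field_simps)
  also have "\<dots> = -1" by (simp add: e_rat_def e_half of_rat_divide)
  finally show ?thesis .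
qed

lemma dyadic_mono:
  assumes "(r::rat) * 2 ^ m \<in> \<int>" and "m \<le> n"
  shows "r * 2 ^ n \<in> \<int>"
proof -
  have "r * 2 ^ n = r * 2 ^ m * of_int (2 ^ (n - m))"
    using \<open>m \<le> n\<close> by (simp add: mult.assoc flip: power_add)
  also have "\<dots> \<in> \<int>" by (rule Ints_mult[OF assms(1) Ints_of_int])
  finally show ?thesis .
qed

lemma dyad_level:
  assumes "(r::rat) * 2 ^ m \<in> \<int>"
  shows "dyad_level r \<le> m" and "r * 2 ^ dyad_level r \<in> \<int>"
  using assms unfolding dyad_level_def by (auto intro: Least_le LeastI)

lemma of_int_mult_dyadic_cong:
  assumes r: "(r::rat) * 2 ^ m \<in> \<int>" and "n mod 2 ^ m = n' mod 2 ^ m"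
  shows "of_int n * r - of_int n' * r \<in> \<int>"
proof -
  obtain t where "n - n' = 2 ^ m * t"
    using assms(2) by (auto simp: mod_eq_dvd_iff elim!: dvdE)
  then have "of_int n * r - of_int n' * r = of_int t * (r * 2 ^ m)"
    by (simp flip: left_diff_distrib of_int_diff)
  then show ?thesis using r by simp
qed

lemma frac_cong: "a - b \<in> \<int> \<Longrightarrow> frac a = frac b"
  using frac_add_int_right[of "a - b" b] by (simp add: add.commute)

lemma Pmap_eq_frac:
  assumes x: "x \<in> Z2" and r: "r * 2 ^ m \<in> \<int>" and y: "x m mod 2 ^ m = y mod 2 ^ m"
  shows "Pmap x r = frac (of_int y * r)"
proof -
  let ?l = "dyad_level r"
  have l_le: "?l \<le> m" and r_l: "r * 2 ^ ?l \<in> \<int>" using dyad_level[OF r] by auto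
  have "x ?l = x m mod 2 ^ m mod 2 ^ ?l"
    using Z2_coord_mod_le[OF x l_le] l_le by (simp add: mod_mod_cancel le_imp_power_dvd)
  also have "\<dots> = y mod 2 ^ ?l"
    using y l_le by (simp add: mod_mod_cancel le_imp_power_dvd)
  finally have "x ?l mod 2 ^ ?l = y mod 2 ^ ?l" by simp
  then have "of_int (x ?l) * r - of_int y * r \<in> \<int>"
    by (rule of_int_mult_dyadic_cong[OF r_l])
  then show ?thesis unfolding Pmap_def by (rule frac_cong)
qed

lemma chi_eq_e_rat:
  assumes "x \<in> Z2" and "r * 2 ^ m \<in> \<int>" and "x m mod 2 ^ m = y mod 2 ^ m"
  shows "chi r x = e_rat (of_int y * r)"
proof -
  have "chi r x = e_rat (frac (of_int y * r))"
    by (simp add: chi_def e_rat_def Pmap_eq_frac[OF assms])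
  also have "\<dots> = e_rat (of_int y * r)"
    by (rule e_rat_cong) (simp add: frac_def)
  finally show ?thesis .
qed

lemma e_rat_of_int_mult_cong:
  assumes "r * 2 ^ m \<in> \<int>" and "n mod 2 ^ m = n' mod 2 ^ m"
  shows "e_rat (of_int n * r) = e_rat (of_int n' * r)"
  by (rule e_rat_cong[OF of_int_mult_dyadic_cong[OF assms]])

lemma Xhat_dyadic: "r \<in> Xhat \<Longrightarrow> \<exists>m. r * 2 ^ m \<in> \<int>"
  by (auto simp: Xhat_def)

lemma Xhat_common_level:
  assumes "r \<in> Xhat" and "s \<in> Xhat"
  obtains m where "k \<le> m" and "r * 2 ^ m \<in> \<int>" and "s * 2 ^ m \<in> \<int>"
proof -
  obtain m1 m2 where "r * 2 ^ m1 \<in> \<int>" "s * 2 ^ m2 \<in> \<int>" using assms Xhat_dyadic by blast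
  then show ?thesis by (intro that[of "m1 + m2 + k"]) (auto intro: dyadic_mono)
qed

lemma frac_dyadic: "(z::rat) * 2 ^ m \<in> \<int> \<Longrightarrow> frac z * 2 ^ m \<in> \<int>"
  by (simp add: frac_def left_diff_distrib)

lemma frac_in_Xhat: "(z::rat) * 2 ^ m \<in> \<int> \<Longrightarrow> frac z \<in> Xhat"
  unfolding Xhat_def by (auto simp: frac_lt_1 dest: frac_dyadic)

lemma Pmap_in_Xhat: "r \<in> Xhat \<Longrightarrow> Pmap x r \<in> Xhat"
proof -
  assume "r \<in> Xhat"
  then obtain m where "r * 2 ^ m \<in> \<int>" using Xhat_dyadic by blast
  then have "of_int (x (dyad_level r)) * r * 2 ^ dyad_level r \<in> \<int>"
    using dyad_level(2) Ints_mult[OF Ints_of_int] by (simp add: mult.assoc)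
  then show ?thesis unfolding Pmap_def by (rule frac_in_Xhat)
qed

section \<open>The two preimages under \<open>P\<^sub>2\<^sub>q\<close>\<close>

abbreviation P2q :: "rat \<Rightarrow> rat" where
  "P2q \<equiv> Pmap z2_2q"

lemma P2q_eq_frac:
  assumes "r * 2 ^ m \<in> \<int>"
  shows "P2q r = frac (2 * of_int (z2_q m) * r)"
proof -
  have "P2q r = frac (of_int (2 * z2_q m) * r)"
    by (rule Pmap_eq_frac[OF z2_2q_in_Z2 assms z2_2q_coord_mod])
  then show ?thesis by simp
qed

lemma two_q_mult_cong_iff:
  fixes r s :: rat
  assumes r: "r * 2 ^ m \<in> \<int>" and s: "s * 2 ^ m \<in> \<int>"
  shows "2 * of_int (z2_q m) * r - s \<in> \<int> \<longleftrightarrow> 2 * r - 3 * s \<in> \<int>"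
proof -
  define Q where "Q = (of_int (z2_q m) :: rat)"
  obtain t where t: "3 * Q = 1 + 2 ^ m * of_int t" using three_mul_z2_q_coord Q_def by blast
  have "3 * (2 * Q * r - s) = 2 * r * (3 * Q) - 3 * s" by (simp add: algebra_simps)
  also have "\<dots> = 2 * r - 3 * s + 2 * of_int t * (r * 2 ^ m)" by (subst t) (simp add: algebra_simps)
  finally have A: "2 * r - 3 * s = 3 * (2 * Q * r - s) - 2 * of_int t * (r * 2 ^ m)" by simp
  have "2 * Q * r - s = Q * (2 * r - 3 * s) + (3 * Q - 1) * s" by (simp add: algebra_simps)
  also have "(3 * Q - 1) * s = of_int t * (s * 2 ^ m)" unfolding t by (simp add: algebra_simps)
  finally have B: "2 * Q * r - s = Q * (2 * r - 3 * s) + of_int t * (s * 2 ^ m)" .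
  have "2 * Q * r - s \<in> \<int> \<longleftrightarrow> 2 * r - 3 * s \<in> \<int>"
  proof
    assume "2 * Q * r - s \<in> \<int>"
    then show "2 * r - 3 * s \<in> \<int>"
      unfolding A using r by (intro Ints_diff[OF Ints_mult[of 3] Ints_mult[of "2 * of_int t"]]) auto
  next
    assume "2 * r - 3 * s \<in> \<int>"
    then show "2 * Q * r - s \<in> \<int>"
      unfolding B using s by (intro Ints_add[OF Ints_mult[of Q] Ints_mult[of "of_int t"]]) (auto simp: Q_def)
  qed
  then show ?thesis by (simp add: Q_def)
qed

lemma P2q_eq_iff:
  assumes r: "r \<in> Xhat" and s: "s \<in> Xhat"
  shows "P2q r = s \<longleftrightarrow> 2 * r - 3 * s \<in> \<int>"
proof -
  obtain m where r_m: "r * 2 ^ m \<in> \<int>" and s_m: "s * 2 ^ m \<in> \<int>"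
    using Xhat_common_level[OF r s] by blast
  have "P2q r = s \<longleftrightarrow> 2 * of_int (z2_q m) * r - s \<in> \<int>"
    using s by (simp add: P2q_eq_frac[OF r_m] frac_unique_iff Xhat_def)
  also have "\<dots> \<longleftrightarrow> 2 * r - 3 * s \<in> \<int>" by (rule two_q_mult_cong_iff[OF r_m s_m])
  finally show ?thesis .
qed

definition preim0 :: "rat \<Rightarrow> rat" where
  "preim0 s = frac (3 * s / 2)"

definition preim1 :: "rat \<Rightarrow> rat" where
  "preim1 s = frac (3 * s / 2 + 1 / 2)"

lemma Ints_two_mult_diff_iff:
  assumes "0 \<le> r" and "r < 1"
  shows "2 * r - 3 * s \<in> \<int> \<longleftrightarrow> r = preim0 s \<or> r = preim1 s"
proof
  assume "2 * r - 3 * s \<in> \<int>"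
  then obtain k where k: "2 * r - 3 * s = of_int k" by (auto elim!: Ints_cases)
  consider j where "k = 2 * j" | j where "k = 2 * j + 1" by (metis evenE oddE)
  then show "r = preim0 s \<or> r = preim1 s"
  proof cases
    case 1
    then have "3 * s / 2 = r + of_int (- j)" using k by (simp add: field_simps)
    then have "preim0 s = frac r" unfolding preim0_def by (simp only: frac_add_of_int_right)
    then show ?thesis using assms by (simp add: frac_eq)
  next
    case 2
    then have "3 * s / 2 + 1 / 2 = r + of_int (- j)" using k by (simp add: field_simps)
    then have "preim1 s = frac r" unfolding preim1_def by (simp only: frac_add_of_int_right)
    then show ?thesis using assms by (simp add: frac_eq)
  qed
next
  have "2 * frac (3 * s / 2 + h) - 3 * s \<in> \<int>" if "2 * h \<in> \<int>" for h
  proof -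
    have "2 * frac (3 * s / 2 + h) - 3 * s = 2 * h - 2 * of_int \<lfloor>3 * s / 2 + h\<rfloor>"
      by (simp add: frac_def algebra_simps)
    then show ?thesis using that by simp
  qed
  from this[of 0] this[of "1/2"]
  show "r = preim0 s \<or> r = preim1 s \<Longrightarrow> 2 * r - 3 * s \<in> \<int>"
    by (auto simp: preim0_def preim1_def)
qed

lemma preim_in_Xhat:
  assumes "s \<in> Xhat"
  shows "preim0 s \<in> Xhat" and "preim1 s \<in> Xhat"
proof -
  obtain m where m: "s * 2 ^ m \<in> \<int>" using assms Xhat_dyadic by blast
  have "frac (3 * s / 2 + h) \<in> Xhat" if "2 * h \<in> \<int>" for h
  proof (rule frac_in_Xhat)
    have "(3 * s / 2 + h) * 2 ^ Suc m = 3 * (s * 2 ^ m) + 2 * h * 2 ^ m" by (simp add: field_simps)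
    then show "(3 * s / 2 + h) * 2 ^ Suc m \<in> \<int>" using m that by simp
  qed
  from this[of 0] this[of "1/2"] show "preim0 s \<in> Xhat" "preim1 s \<in> Xhat"
    by (simp_all add: preim0_def preim1_def)
qed

lemma P2q_preimage:
  assumes s: "s \<in> Xhat"
  shows "{r \<in> Xhat. P2q r = s} = {preim0 s, preim1 s}"
proof -
  have "P2q r = s \<longleftrightarrow> r = preim0 s \<or> r = preim1 s" if "r \<in> Xhat" for r
    using P2q_eq_iff[OF that s] Ints_two_mult_diff_iff that by (simp add: Xhat_def)
  then show ?thesis using preim_in_Xhat[OF s] by auto
qed

lemma preim1_minus_preim0: "preim1 s - preim0 s - 1/2 \<in> \<int>"
proof -
  have "preim1 s - preim0 s - 1/2 = of_int (\<lfloor>3 * s / 2\<rfloor> - \<lfloor>3 * s / 2 + 1/2\<rfloor>)"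
    by (simp add: preim0_def preim1_def frac_def)
  then show ?thesis by simp
qed

lemma preim0_neq_preim1: "preim0 s \<noteq> preim1 s"
proof
  assume "preim0 s = preim1 s"
  then have "- (1/2::rat) \<in> \<int>" using preim1_minus_preim0[of s] by simp
  then have "frac (- (1/2::rat)) = 0" by simp
  then show False by (simp add: frac_neg)
qed

section \<open>The Haar measure\<close>

abbreviation int_seqs :: "z2 measure" where
  "int_seqs \<equiv> PiM UNIV (\<lambda>_::nat. count_space (UNIV::int set))"

lemma space_int_seqs [simp]: "space int_seqs = UNIV"
  by (simp add: space_PiM)

lemma space_haar [simp]: "space haar = UNIV"
  by (simp add: haar_def)

lemma sets_haar [simp]: "sets haar = sets int_seqs"
  by (simp add: haar_def)

lemma measurable_haar: "measurable haar M = measurable int_seqs M"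
  by (rule measurable_cong_sets) simp_all

lemma Z2_in_sets: "Z2 \<in> sets int_seqs"
proof -
  have "Z2 = {x \<in> space int_seqs. (\<forall>n. 0 \<le> x n \<and> x n < 2 ^ n) \<and> (\<forall>n. x (Suc n) mod 2 ^ n = x n)}"
    by (simp add: Z2_def)
  also have "\<dots> \<in> sets int_seqs" by measurable
  finally show ?thesis .
qed

lemma coord_pred_in_sets: "{x. P (x n)} \<in> sets int_seqs"
proof -
  have "{x. P (x n)} = (\<lambda>x. x n) -` {v. P v} \<inter> space int_seqs" by auto
  also have "\<dots> \<in> sets int_seqs"
    by (rule measurable_sets[OF measurable_component_singleton]) auto
  finally show ?thesis .
qed

lemma coord_eq_in_sets [simp]: "{x. x n = u} \<in> sets int_seqs"
  using coord_pred_in_sets[of "\<lambda>v. v = u" n] by simp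

lemma coord_measurable: "sets M = sets int_seqs \<Longrightarrow> (\<lambda>x. x n) \<in> measurable M (count_space UNIV)"
  using measurable_component_singleton[of n UNIV "\<lambda>_. count_space (UNIV::int set)"]
  by (simp add: measurable_cong_sets)

lemma space_coin_flips [simp]: "space coin_flips = UNIV"
  by (simp add: coin_flips_def space_PiM)

lemma coin_flips_prefix_in_sets: "{b. \<forall>i<n. b i = c i} \<in> sets coin_flips"
proof -
  have "{b. \<forall>i<n. b i = c i} = {b \<in> space coin_flips. \<forall>i<n. b i = c i}" by simp
  also have "\<dots> \<in> sets coin_flips" unfolding coin_flips_def by measurable
  finally show ?thesis .
qed

lemma binary_sum_eq_iff:
  "(\<Sum>i<n. if b i then 2 ^ i else 0) = (u::int) \<longleftrightarrow>
     0 \<le> u \<and> u < 2 ^ n \<and> (\<forall>i<n. b i = odd (u div 2 ^ i))"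
proof (induction n arbitrary: b u)
  case (Suc n)
  define x where "x = (if b 0 then 1 else 0 :: int)"
  define y where "y = (\<Sum>i<n. if b (Suc i) then 2 ^ i else 0 :: int)"
  have "(\<Sum>i<Suc n. if b i then 2 ^ i else 0 :: int) = x + 2 * y"
    unfolding x_def y_def sum.lessThan_Suc_shift
    by (simp add: sum_distrib_left if_distrib cong: if_cong)
  then have "(\<Sum>i<Suc n. if b i then 2 ^ i else 0) = u \<longleftrightarrow> x + 2 * y = u"
    by simp
  also have "\<dots> \<longleftrightarrow> x = u mod 2 \<and> y = u div 2"
  proof -
    have "x = 0 \<or> x = 1" by (simp add: x_def)
    then show ?thesis by presburger
  qed
  also have "x = u mod 2 \<longleftrightarrow> b 0 = odd u"
    by (auto simp: x_def odd_iff_mod_2_eq_one)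
  also have "y = u div 2 \<longleftrightarrow>
      0 \<le> u div 2 \<and> u div 2 < 2 ^ n \<and> (\<forall>i<n. b (Suc i) = odd (u div 2 ^ Suc i))"
    unfolding y_def Suc.IH by (simp add: zdiv_zmult2_eq)
  also have "b 0 = odd u \<and> 0 \<le> u div 2 \<and> u div 2 < 2 ^ n \<and> (\<forall>i<n. b (Suc i) = odd (u div 2 ^ Suc i))
      \<longleftrightarrow> 0 \<le> u \<and> u < 2 ^ Suc n \<and> (\<forall>i<Suc n. b i = odd (u div 2 ^ i))"
    by (auto simp: less_Suc_eq_0_disj)
  finally show ?case .
qed auto

lemma bits_to_z2_coord_eq_iff:
  "bits_to_z2 b n = u \<longleftrightarrow> 0 \<le> u \<and> u < 2 ^ n \<and> (\<forall>i<n. b i = odd (u div 2 ^ i))"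
  unfolding bits_to_z2_def by (rule binary_sum_eq_iff)

lemma bits_to_z2_in_Z2: "bits_to_z2 b \<in> Z2"
proof -
  have bounds: "0 \<le> bits_to_z2 b n \<and> bits_to_z2 b n < 2 ^ n" for n
    using bits_to_z2_coord_eq_iff by blast
  have "bits_to_z2 b (Suc n) = bits_to_z2 b n + (if b n then 2 ^ n else 0)" for n
    by (simp add: bits_to_z2_def)
  then have "bits_to_z2 b (Suc n) mod 2 ^ n = bits_to_z2 b n" for n
    using bounds[of n] by simp
  then show ?thesis unfolding Z2_def using bounds by auto
qed

lemma bits_to_z2_measurable: "bits_to_z2 \<in> measurable coin_flips int_seqs"
proof (rule measurable_PiM_single')
  fix n
  show "(\<lambda>b. bits_to_z2 b n) \<in> measurable coin_flips (count_space UNIV)"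
  proof (subst measurable_count_space_eq2_countable, intro conjI ballI)
    fix u :: int
    show "(\<lambda>b. bits_to_z2 b n) -` {u} \<inter> space coin_flips \<in> sets coin_flips"
    proof (cases "0 \<le> u \<and> u < 2 ^ n")
      case True
      then have "(\<lambda>b. bits_to_z2 b n) -` {u} \<inter> space coin_flips = {b. \<forall>i<n. b i = odd (u div 2 ^ i)}"
        by (intro set_eqI) (simp add: bits_to_z2_coord_eq_iff)
      then show ?thesis using coin_flips_prefix_in_sets by simp
    next
      case False
      then have "(\<lambda>b. bits_to_z2 b n) -` {u} \<inter> space coin_flips = {}"
        using bits_to_z2_coord_eq_iff by blast
      then show ?thesis by simp
    qed
  qed auto
qed auto

lemma prob_space_coin_flips: "prob_space coin_flips"
  unfolding coin_flips_def by (intro prob_space_PiM prob_space_measure_pmf)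

lemma prob_space_haar: "prob_space haar"
  unfolding haar_def
  by (rule prob_space.prob_space_distr[OF prob_space_coin_flips bits_to_z2_measurable])

lemma AE_haar_Z2: "AE x in haar. x \<in> Z2"
  unfolding haar_def
  by (subst AE_distr_iff[OF bits_to_z2_measurable]) (auto simp: bits_to_z2_in_Z2 Z2_in_sets)

lemma emeasure_haar_coord:
  "emeasure haar {x. x n = u} = (if 0 \<le> u \<and> u < 2 ^ n then ennreal ((1/2) ^ n) else 0)"
proof -
  let ?coin = "measure_pmf (pmf_of_set {False, True})"
  have "emeasure haar {x. x n = u} = emeasure coin_flips (bits_to_z2 -` {x. x n = u})"
    unfolding haar_def by (subst emeasure_distr[OF bits_to_z2_measurable]) auto
  also have "\<dots> = (if 0 \<le> u \<and> u < 2 ^ n then ennreal ((1/2) ^ n) else 0)"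
  proof (cases "0 \<le> u \<and> u < 2 ^ n")
    case True
    define c where "c i = odd (u div 2 ^ i)" for i
    have "bits_to_z2 -` {x. x n = u} = prod_emb UNIV (\<lambda>_. ?coin) {..<n} (Pi\<^sub>E {..<n} (\<lambda>i. {c i}))"
      by (intro set_eqI) (simp add: bits_to_z2_coord_eq_iff[of _ n u] True space_PiM prod_emb_def PiE_iff c_def Ball_def)
    then have "emeasure coin_flips (bits_to_z2 -` {x. x n = u}) = (\<Prod>i<n. emeasure ?coin {c i})"
      unfolding coin_flips_def by (simp add: emeasure_PiM_emb prob_space_measure_pmf)
    also have "\<dots> = (\<Prod>i<n. ennreal (1/2))"
      by (intro prod.cong refl) (simp add: emeasure_pmf_single)
    also have "\<dots> = ennreal (1/2) ^ n" by (subst prod_constant) simp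
    also have "\<dots> = ennreal ((1/2) ^ n)" by (rule ennreal_power) simp
    finally show ?thesis using True by simp
  next
    case False
    then have "bits_to_z2 -` {x. x n = u} = {}" using bits_to_z2_coord_eq_iff by blast
    then show ?thesis using False by simp
  qed
  finally show ?thesis .
qed

lemma emeasure_haar_cong:
  assumes "\<And>x. x \<in> Z2 \<Longrightarrow> x \<in> A \<longleftrightarrow> x \<in> B" and "A \<in> sets int_seqs" and "B \<in> sets int_seqs"
  shows "emeasure haar A = emeasure haar B"
  by (rule emeasure_eq_AE) (use AE_haar_Z2 assms in \<open>auto elim!: eventually_mono\<close>)

lemma emeasure_coord_in_eq:
  assumes sets_M: "sets M = sets int_seqs" and sets_N: "sets N = sets int_seqs"
    and "\<And>u. emeasure M {x. x n = u} = emeasure N {x. x n = u}"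
  shows "emeasure M {x. x n \<in> G} = emeasure N {x. x n \<in> G}"
proof -
  have space: "space M = UNIV" "space N = UNIV"
    using sets_eq_imp_space_eq[OF sets_M] sets_eq_imp_space_eq[OF sets_N] by simp_all
  have "distr M (count_space UNIV) (\<lambda>x. x n) = distr N (count_space UNIV) (\<lambda>x. x n)"
  proof (rule measure_eqI_countable[where A = UNIV])
    fix u :: int
    show "emeasure (distr M (count_space UNIV) (\<lambda>x. x n)) {u} =
        emeasure (distr N (count_space UNIV) (\<lambda>x. x n)) {u}"
      using assms(3)[of u] space
      by (simp add: emeasure_distr coord_measurable[OF sets_M] coord_measurable[OF sets_N] vimage_def)
  qed auto
  then show ?thesis
    using space emeasure_distr[OF coord_measurable[OF sets_M], of G n]
      emeasure_distr[OF coord_measurable[OF sets_N], of G n]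
    by (simp add: vimage_def)
qed

lemma measure_eqI_Z2:
  assumes sets_M: "sets M = sets int_seqs" and sets_N: "sets N = sets int_seqs"
    and "finite_measure M"
    and AE_M: "AE x in M. x \<in> Z2" and AE_N: "AE x in N. x \<in> Z2"
    and coords: "\<And>n u. emeasure M {x. x (Suc n) = u} = emeasure N {x. x (Suc n) = u}"
  shows "M = N"
proof (rule measure_eqI_PiM_infinite[where I = UNIV and M = "\<lambda>_. count_space UNIV"])
  fix A J assume J: "finite (J::nat set)"
  \<comment> \<open>On \<open>Z2\<close> a cylinder over \<open>J\<close> is determined by the single coordinate \<open>Suc n > max J\<close>.\<close>
  define n where "n = Max (insert 0 J)"
  define C where "C = prod_emb UNIV (\<lambda>_. count_space (UNIV::int set)) J (Pi\<^sub>E J A)"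
  define G where "G = {v. \<forall>i\<in>J. v mod 2 ^ i \<in> A i}"
  have C_iff: "x \<in> C \<longleftrightarrow> x (Suc n) \<in> G" if "x \<in> Z2" for x
  proof -
    have "i \<le> Suc n" if "i \<in> J" for i using J that unfolding n_def by (simp add: le_SucI)
    then show ?thesis using Z2_coord_mod_le[OF \<open>x \<in> Z2\<close>]
      by (simp add: C_def G_def prod_emb_def PiE_iff space_PiM)
  qed
  have C_eq: "emeasure L C = emeasure L {x. x (Suc n) \<in> G}"
    if sets_L: "sets L = sets int_seqs" and AE_L: "AE x in L. x \<in> Z2" for L
  proof (rule emeasure_eq_AE)
    show "AE x in L. (x \<in> C) = (x \<in> {x. x (Suc n) \<in> G})"
      using AE_L by eventually_elim (simp add: C_iff)
    show "{x. x (Suc n) \<in> G} \<in> sets L"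
      using coord_pred_in_sets[of "\<lambda>v. v \<in> G" "Suc n"] by (simp add: sets_L)
    show "C \<in> sets L" unfolding sets_L C_def by (rule sets_PiM_I) (use J in auto)
  qed
  have "emeasure M {x. x (Suc n) \<in> G} = emeasure N {x. x (Suc n) \<in> G}"
    by (rule emeasure_coord_in_eq[OF sets_M sets_N coords])
  then show "emeasure M (prod_emb UNIV (\<lambda>_. count_space UNIV) J (Pi\<^sub>E J A)) =
      emeasure N (prod_emb UNIV (\<lambda>_. count_space UNIV) J (Pi\<^sub>E J A))"
    using C_eq[OF sets_M AE_M] C_eq[OF sets_N AE_N] unfolding C_def by simp
qed (use assms in auto)

section \<open>The affine maps \<open>x \<mapsto> 2q x - a\<close>\<close>

definition T2q :: "z2 \<Rightarrow> z2 \<Rightarrow> z2" where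
  "T2q a x = z2_sub (z2_mul z2_2q x) a"

definition parity_class :: "z2 \<Rightarrow> z2 set" where
  "parity_class a = {y. even (y 1 + a 1)}"

lemma parity_class_in_sets: "parity_class a \<in> sets int_seqs"
  unfolding parity_class_def by (rule coord_pred_in_sets)

lemma T2q_in_Z2 [simp]: "x \<in> Z2 \<Longrightarrow> a \<in> Z2 \<Longrightarrow> T2q a x \<in> Z2"
  by (simp add: T2q_def)

lemma T2q_coord_mod: "T2q a x n mod 2 ^ n = (2 * z2_q n * x n - a n) mod 2 ^ n"
proof -
  have "T2q a x n = (z2_2q n * x n mod 2 ^ n - a n) mod 2 ^ n"
    by (simp add: T2q_def z2_sub_def z2_mul_def)
  also have "\<dots> = (z2_2q n * x n - a n) mod 2 ^ n" by (simp add: mod_diff_left_eq)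
  also have "\<dots> = (2 * z2_q n * x n - a n) mod 2 ^ n"
    by (intro mod_diff_cong mod_mult_cong z2_2q_coord_mod refl)
  finally show ?thesis by simp
qed

lemma double_dvd_iff_halve:
  fixes q X A v M t :: int
  assumes q: "3 * q = 1 + 2 * M * t"
  shows "(2 * M) dvd (2 * q * X - A - v) \<longleftrightarrow> even (v + A) \<and> M dvd (X - 3 * ((v + A) div 2))"
proof
  assume d: "(2 * M) dvd (2 * q * X - A - v)"
  then have "2 dvd (2 * q * X - A - v)" using dvd_mult_left by blast
  moreover have "v + A = 2 * (q * X) - (2 * q * X - A - v)" by simp
  ultimately have ev: "even (v + A)" by (metis dvd_diff dvd_triv_left)
  then obtain w where w: "v + A = 2 * w" by blast
  have eq: "2 * q * X - A - v = 2 * (q * X - w)" using w by simp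
  from d have "2 * M dvd 2 * (q * X - w)" unfolding eq .
  then have "M dvd (q * X - w)" by (metis dvd_times_left_cancel_iff zero_neq_numeral)
  moreover have "X - 3 * w = 3 * (q * X - w) - (3 * q - 1) * X" by (simp add: algebra_simps)
  moreover have "M dvd (3 * q - 1) * X" using q by simp
  ultimately have "M dvd X - 3 * w" by (metis dvd_diff dvd_mult)
  then show "even (v + A) \<and> M dvd (X - 3 * ((v + A) div 2))" using ev w by simp
next
  assume "even (v + A) \<and> M dvd (X - 3 * ((v + A) div 2))"
  then have ev: "even (v + A)" and d: "M dvd X - 3 * ((v + A) div 2)" by auto
  define w where "w = (v + A) div 2"
  have w: "v + A = 2 * w" using ev unfolding w_def by simp
  have d: "M dvd X - 3 * w" using d unfolding w_def .
  have "q * X - w = q * (X - 3 * w) + (3 * q - 1) * w" by (simp add: algebra_simps)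
  moreover have "M dvd (3 * q - 1) * w" using q by simp
  ultimately have "M dvd q * X - w" using d by (metis dvd_add dvd_mult)
  moreover have "2 * q * X - A - v = 2 * (q * X - w)" using w by simp
  ultimately show "(2 * M) dvd (2 * q * X - A - v)" by (metis mult_dvd_mono dvd_refl)
qed

lemma T2q_coord_Suc_eq_iff:
  assumes x: "x \<in> Z2" and a: "a \<in> Z2"
  shows "T2q a x (Suc n) = v \<longleftrightarrow>
    0 \<le> v \<and> v < 2 ^ Suc n \<and> even (v + a (Suc n)) \<and> x n = 3 * ((v + a (Suc n)) div 2) mod 2 ^ n"
proof (cases "0 \<le> v \<and> v < 2 ^ Suc n")
  case True
  obtain t where t: "3 * z2_q (Suc n) = 1 + 2 * 2 ^ n * t"
    using three_mul_z2_q_coord[of "Suc n", where 'a = int] by auto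
  have "T2q a x (Suc n) = (2 * z2_q (Suc n) * x (Suc n) - a (Suc n)) mod 2 ^ Suc n"
    using T2q_coord_mod[of a x "Suc n"] Z2_coord_mod[OF T2q_in_Z2[OF x a], of "Suc n"] by simp
  then have "T2q a x (Suc n) = v \<longleftrightarrow> (2 * z2_q (Suc n) * x (Suc n) - a (Suc n)) mod 2 ^ Suc n = v mod 2 ^ Suc n"
    using True by simp
  also have "\<dots> \<longleftrightarrow> 2 * 2 ^ n dvd 2 * z2_q (Suc n) * x (Suc n) - a (Suc n) - v"
    by (simp add: mod_eq_dvd_iff)
  also have "\<dots> \<longleftrightarrow> even (v + a (Suc n)) \<and> 2 ^ n dvd x (Suc n) - 3 * ((v + a (Suc n)) div 2)"
    by (rule double_dvd_iff_halve[OF t])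
  also have "2 ^ n dvd x (Suc n) - 3 * ((v + a (Suc n)) div 2) \<longleftrightarrow> x n = 3 * ((v + a (Suc n)) div 2) mod 2 ^ n"
    unfolding Z2_coord_Suc_mod[OF x, of n, symmetric] by (simp add: mod_eq_dvd_iff)
  finally show ?thesis using True by simp
next
  case False
  then show ?thesis using Z2_coord_bounds[OF T2q_in_Z2[OF x a], of "Suc n"] by auto
qed

lemma T2q_measurable: "T2q a \<in> measurable int_seqs int_seqs"
proof (rule measurable_PiM_single')
  fix n
  have "(\<lambda>x. T2q a x n) = (\<lambda>v. (z2_2q n * v mod 2 ^ n - a n) mod 2 ^ n) \<circ> (\<lambda>x. x n)"
    by (auto simp: T2q_def z2_sub_def z2_mul_def)
  also have "\<dots> \<in> measurable int_seqs (count_space UNIV)"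
    by (rule measurable_comp[OF measurable_component_singleton]) auto
  finally show "(\<lambda>x. T2q a x n) \<in> measurable int_seqs (count_space UNIV)" .
qed auto

lemma T2q_measurable_haar: "T2q a \<in> measurable haar haar"
  using T2q_measurable by (simp add: measurable_haar measurable_cong_sets[OF refl sets_haar])

lemma emeasure_haar_T2q_coord:
  assumes a: "a \<in> Z2"
  shows "emeasure haar {x. T2q a x (Suc n) = v} =
    (if 0 \<le> v \<and> v < 2 ^ Suc n \<and> even (v + a (Suc n)) then ennreal ((1/2) ^ n) else 0)"
proof -
  let ?c = "0 \<le> v \<and> v < 2 ^ Suc n \<and> even (v + a (Suc n))"
  have "{x. T2q a x (Suc n) = v} \<in> sets int_seqs"
    using measurable_sets[OF T2q_measurable coord_eq_in_sets, of a "Suc n" v] by (simp add: vimage_def)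
  then have "emeasure haar {x. T2q a x (Suc n) = v} =
      emeasure haar (if ?c then {x. x n = 3 * ((v + a (Suc n)) div 2) mod 2 ^ n} else {})"
    by (intro emeasure_haar_cong) (auto simp: T2q_coord_Suc_eq_iff[OF _ a])
  also have "\<dots> = (if ?c then ennreal ((1/2) ^ n) else 0)"
    by (simp add: emeasure_haar_coord)
  finally show ?thesis .
qed

lemma emeasure_haar_parity_class_coord:
  assumes a: "a \<in> Z2"
  shows "emeasure haar (parity_class a \<inter> {y. y (Suc n) = v}) =
    (if 0 \<le> v \<and> v < 2 ^ Suc n \<and> even (v + a (Suc n)) then ennreal ((1/2) ^ Suc n) else 0)"
proof -
  have "emeasure haar (parity_class a \<inter> {y. y (Suc n) = v}) =
      emeasure haar (if even (v + a (Suc n)) then {y. y (Suc n) = v} else {})"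
  proof (rule emeasure_haar_cong)
    fix y assume y: "y \<in> Z2"
    have "y (Suc n) mod 2 = y 1" "a (Suc n) mod 2 = a 1"
      using Z2_coord_mod_le[OF y, of 1 "Suc n"] Z2_coord_mod_le[OF a, of 1 "Suc n"] by auto
    then show "y \<in> parity_class a \<inter> {y. y (Suc n) = v} \<longleftrightarrow>
        y \<in> (if even (v + a (Suc n)) then {y. y (Suc n) = v} else {})"
      by (auto simp: parity_class_def) presburger+
  qed (use parity_class_in_sets in auto)
  then show ?thesis by (auto simp: emeasure_haar_coord)
qed

lemma ennreal_double_half_power: "2 * ennreal ((1/2) ^ Suc n) = ennreal ((1/2) ^ n)"
proof -
  have "2 * ennreal ((1/2) ^ Suc n) = ennreal 2 * ennreal ((1/2) ^ Suc n)" by simp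
  also have "\<dots> = ennreal (2 * (1/2) ^ Suc n)" by (rule ennreal_mult[symmetric]) auto
  also have "2 * (1/2::real) ^ Suc n = (1/2) ^ n" by simp
  finally show ?thesis .
qed

lemma distr_haar_T2q:
  assumes a: "a \<in> Z2"
  shows "distr haar int_seqs (T2q a) = density haar (\<lambda>y. ennreal (2 * indicator (parity_class a) y))"
proof (rule measure_eqI_Z2)
  have T2q_haar: "T2q a \<in> measurable haar int_seqs"
    by (simp add: measurable_haar T2q_measurable)
  have density_measurable: "(\<lambda>y. ennreal (2 * indicator (parity_class a) y)) \<in> borel_measurable haar"
    using parity_class_in_sets by (simp add: measurable_haar)
  show "finite_measure (distr haar int_seqs (T2q a))"
    using prob_space.prob_space_distr[OF prob_space_haar T2q_haar] by (simp add: prob_space_def)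
  show "AE x in distr haar int_seqs (T2q a). x \<in> Z2"
    by (subst AE_distr_iff[OF T2q_haar])
       (use AE_haar_Z2 a Z2_in_sets in \<open>auto elim!: eventually_mono\<close>)
  show "AE x in density haar (\<lambda>y. ennreal (2 * indicator (parity_class a) y)). x \<in> Z2"
    by (subst AE_density[OF density_measurable]) (use AE_haar_Z2 in \<open>auto elim!: eventually_mono\<close>)
  fix n :: nat and v :: int
  have "emeasure (distr haar int_seqs (T2q a)) {y. y (Suc n) = v} = emeasure haar {x. T2q a x (Suc n) = v}"
    by (subst emeasure_distr[OF T2q_haar coord_eq_in_sets]) (auto simp: vimage_def)
  also have "\<dots> = 2 * emeasure haar (parity_class a \<inter> {y. y (Suc n) = v})"
    unfolding emeasure_haar_T2q_coord[OF a] emeasure_haar_parity_class_coord[OF a]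
    using ennreal_double_half_power[of n] by (simp only: if_distrib[of "(*) 2"] mult_zero_right)
  also have "\<dots> = (\<integral>\<^sup>+ y. 2 * indicator (parity_class a \<inter> {y. y (Suc n) = v}) y \<partial>haar)"
    by (rule nn_integral_cmult_indicator[symmetric]) (simp add: parity_class_in_sets sets.Int)
  also have "\<dots> = emeasure (density haar (\<lambda>y. ennreal (2 * indicator (parity_class a) y))) {y. y (Suc n) = v}"
    by (subst emeasure_density[OF density_measurable])
       (auto intro!: nn_integral_cong split: split_indicator)
  finally show "emeasure (distr haar int_seqs (T2q a)) {y. y (Suc n) = v} =
      emeasure (density haar (\<lambda>y. ennreal (2 * indicator (parity_class a) y))) {y. y (Suc n) = v}" .
qed simp_all

section \<open>Fourier coefficients of \<open>f \<circ> T2q a\<close>\<close>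

lemma norm_chi [simp]: "cmod (chi r x) = 1"
  by (simp add: chi_def norm_e)

lemma fun_of_chi_measurable: "(\<lambda>x. h (chi r x)) \<in> borel_measurable haar"
proof -
  have "(\<lambda>x. h (chi r x)) = (\<lambda>v. h (e (of_rat (frac (of_int v * r))))) \<circ> (\<lambda>x. x (dyad_level r))"
    by (auto simp: chi_def Pmap_def)
  also have "\<dots> \<in> borel_measurable haar"
    by (rule measurable_comp[OF coord_measurable[OF sets_haar]]) simp
  finally show ?thesis .
qed

lemma integrable_mult_unimodular:
  fixes f g :: "'a \<Rightarrow> 'b::{banach, real_normed_div_algebra, second_countable_topology}"
  assumes f: "integrable M f" and "g \<in> borel_measurable M" and "\<And>x. norm (g x) = 1"
  shows "integrable M (\<lambda>x. f x * g x)"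
proof (rule Bochner_Integration.integrable_bound[OF f])
  show "(\<lambda>x. f x * g x) \<in> borel_measurable M"
    using borel_measurable_integrable[OF f] assms(2) by (rule borel_measurable_times)
  show "AE x in M. norm (f x * g x) \<le> norm (f x)" by (simp add: norm_mult assms(3))
qed

lemma integrable_mult_cnj_chi:
  assumes "integrable haar f"
  shows "integrable haar (\<lambda>x. f x * cnj (chi r x))"
proof (rule integrable_mult_unimodular[OF assms])
  show "(\<lambda>x. cnj (chi r x)) \<in> borel_measurable haar" by (rule fun_of_chi_measurable)
qed simp

lemma integral_comp_T2q:
  fixes h :: "z2 \<Rightarrow> 'b::{banach, second_countable_topology}"
  assumes a: "a \<in> Z2" and h: "h \<in> borel_measurable haar"
  shows "(\<integral>x. h (T2q a x) \<partial>haar) = (\<integral>y. (2 * indicator (parity_class a) y :: real) *\<^sub>R h y \<partial>haar)"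
    and "integrable haar h \<Longrightarrow> integrable haar (\<lambda>x. h (T2q a x))"
proof -
  have T2q_haar: "T2q a \<in> measurable haar int_seqs"
    by (simp add: measurable_haar T2q_measurable)
  have h': "h \<in> borel_measurable int_seqs" using h by (simp add: measurable_haar)
  have density_measurable: "(\<lambda>y. 2 * indicator (parity_class a) y :: real) \<in> borel_measurable haar"
    using parity_class_in_sets by (simp add: measurable_haar)
  have "(\<integral>x. h (T2q a x) \<partial>haar) = (\<integral>y. h y \<partial>distr haar int_seqs (T2q a))"
    by (rule integral_distr[symmetric, OF T2q_haar h'])
  also have "\<dots> = (\<integral>y. (2 * indicator (parity_class a) y :: real) *\<^sub>R h y \<partial>haar)"
    unfolding distr_haar_T2q[OF a] by (rule integral_density) (use h density_measurable in auto)
  finally show "(\<integral>x. h (T2q a x) \<partial>haar) = (\<integral>y. (2 * indicator (parity_class a) y :: real) *\<^sub>R h y \<partial>haar)" .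
  assume "integrable haar h"
  then have "integrable haar (\<lambda>y. 2 *\<^sub>R (indicator (parity_class a) y *\<^sub>R h y))"
    using parity_class_in_sets by (intro integrable_scaleR_right integrable_mult_indicator) auto
  then have "integrable haar (\<lambda>y. (2 * indicator (parity_class a) y :: real) *\<^sub>R h y)"
    by simp
  then have "integrable (distr haar int_seqs (T2q a)) h"
    unfolding distr_haar_T2q[OF a] using h density_measurable
    by (subst integrable_density) auto
  then show "integrable haar (\<lambda>x. h (T2q a x))"
    by (subst (asm) integrable_distr_eq[OF T2q_haar h'])
qed

lemma chi_neg_mult_cnj_chi:
  assumes a: "a \<in> Z2" and y: "y \<in> Z2" and r: "r * 2 ^ m \<in> \<int>"
  shows "chi r (z2_neg a) * cnj (chi r y) = e_rat (of_int (- (a m + y m)) * r)"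
proof -
  have "chi r (z2_neg a) = e_rat (of_int (- a m) * r)"
    by (rule chi_eq_e_rat[OF z2_neg_in_Z2[OF a] r]) (simp add: z2_neg_def)
  moreover have "chi r y = e_rat (of_int (y m) * r)"
    by (rule chi_eq_e_rat[OF y r]) simp
  ultimately have "chi r (z2_neg a) * cnj (chi r y) = e_rat (of_int (- a m) * r + - (of_int (y m) * r))"
    by (simp only: cnj_e_rat e_rat_add)
  also have "of_int (- a m) * r + - (of_int (y m) * r) = of_int (- (a m + y m)) * r"
    by (simp add: algebra_simps)
  finally show ?thesis .
qed

lemma chi_neg_mult_cnj_chi_T2q:
  assumes x: "x \<in> Z2" and a: "a \<in> Z2" and r: "r \<in> Xhat" and s: "s \<in> Xhat" and "P2q r = s"
  shows "chi r (z2_neg a) * cnj (chi r (T2q a x)) = cnj (chi s x)"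
proof -
  obtain m where r_m: "r * 2 ^ m \<in> \<int>" and s_m: "s * 2 ^ m \<in> \<int>"
    using Xhat_common_level[OF r s] by blast
  have "chi r (z2_neg a) * cnj (chi r (T2q a x)) = e_rat (of_int (- (a m + T2q a x m)) * r)"
    by (rule chi_neg_mult_cnj_chi[OF a T2q_in_Z2[OF x a] r_m])
  also have "\<dots> = e_rat (of_int (- (2 * z2_q m * x m)) * r)"
  proof (rule e_rat_of_int_mult_cong[OF r_m], rule mod_minus_cong)
    have "(a m + T2q a x m) mod 2 ^ m = (a m + (2 * z2_q m * x m - a m)) mod 2 ^ m"
      by (rule mod_add_cong[OF refl T2q_coord_mod])
    then show "(a m + T2q a x m) mod 2 ^ m = 2 * z2_q m * x m mod 2 ^ m" by simp
  qed
  also have "\<dots> = e_rat (of_int (- x m) * s)"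
  proof (rule e_rat_cong)
    have "2 * of_int (z2_q m) * r - s \<in> \<int>"
      using P2q_eq_iff[OF r s] two_q_mult_cong_iff[OF r_m s_m] \<open>P2q r = s\<close> by simp
    moreover have "of_int (- (2 * z2_q m * x m)) * r - of_int (- x m) * s =
        - of_int (x m) * (2 * of_int (z2_q m) * r - s)"
      by (simp add: algebra_simps)
    ultimately show "of_int (- (2 * z2_q m * x m)) * r - of_int (- x m) * s \<in> \<int>" by simp
  qed
  also have "\<dots> = cnj (chi s x)"
    using chi_eq_e_rat[OF x s_m, of "x m"] by (simp add: cnj_e_rat)
  finally show ?thesis .
qed

definition fibre_sum :: "z2 \<Rightarrow> rat \<Rightarrow> z2 \<Rightarrow> complex" where
  "fibre_sum a s y = (\<Sum>r\<in>{preim0 s, preim1 s}. chi r (z2_neg a) * cnj (chi r y))"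

lemma fibre_sum_T2q:
  assumes "x \<in> Z2" and "a \<in> Z2" and s: "s \<in> Xhat"
  shows "fibre_sum a s (T2q a x) = 2 * cnj (chi s x)"
proof -
  have "fibre_sum a s (T2q a x) = (\<Sum>r\<in>{preim0 s, preim1 s}. cnj (chi s x))"
    unfolding fibre_sum_def using P2q_preimage[OF s]
    by (intro sum.cong refl chi_neg_mult_cnj_chi_T2q[OF assms(1,2) _ s]) blast+
  then show ?thesis using preim0_neq_preim1[of s] by simp
qed

lemma fibre_sum_outside_parity_class:
  assumes y: "y \<in> Z2" and a: "a \<in> Z2" and s: "s \<in> Xhat" and "y \<notin> parity_class a"
  shows "fibre_sum a s y = 0"
proof -
  obtain m where "1 \<le> m" and m0: "preim0 s * 2 ^ m \<in> \<int>" and m1: "preim1 s * 2 ^ m \<in> \<int>"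
    using Xhat_common_level[OF preim_in_Xhat[OF s]] by blast
  define n where "n = a m + y m"
  have "a m mod 2 = a 1" "y m mod 2 = y 1"
    using Z2_coord_mod_le[OF a \<open>1 \<le> m\<close>] Z2_coord_mod_le[OF y \<open>1 \<le> m\<close>] by simp_all
  moreover have "odd (y 1 + a 1)" using \<open>y \<notin> parity_class a\<close> by (simp add: parity_class_def)
  ultimately have "odd n" unfolding n_def by presburger
  \<comment> \<open>The two preimages differ by \<open>1/2\<close>, so the two summands differ by the sign \<open>e(n/2) = -1\<close>.\<close>
  have "e_rat (of_int (- n) * preim1 s) = e_rat (of_int (- n) * preim0 s + of_int (- n) / 2)"
  proof (rule e_rat_cong)
    have "of_int (- n) * preim1 s - (of_int (- n) * preim0 s + of_int (- n) / 2) =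
        of_int (- n) * (preim1 s - preim0 s - 1/2)"
      by (simp add: algebra_simps)
    then show "of_int (- n) * preim1 s - (of_int (- n) * preim0 s + of_int (- n) / 2) \<in> \<int>"
      using preim1_minus_preim0 by simp
  qed
  also have "\<dots> = - e_rat (of_int (- n) * preim0 s)"
    using e_rat_odd_half[of "- n"] \<open>odd n\<close> e_rat_add[of "of_int (- n) * preim0 s" "of_int (- n) / 2"]
    by simp
  finally show ?thesis
    using chi_neg_mult_cnj_chi[OF a y m0] chi_neg_mult_cnj_chi[OF a y m1] preim0_neq_preim1[of s]
    by (simp add: fibre_sum_def n_def)
qed

lemma integral_T2q_mult_cnj_chi:
  fixes f :: "z2 \<Rightarrow> complex"
  assumes a: "a \<in> Z2" and s: "s \<in> Xhat" and f: "integrable haar f"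
  shows "(\<integral>x. f (T2q a x) * cnj (chi s x) \<partial>haar) =
    (\<Sum>r\<in>{preim0 s, preim1 s}. chi r (z2_neg a) * (\<integral>y. f y * cnj (chi r y) \<partial>haar))"
proof -
  have fibre_sum_measurable: "fibre_sum a s \<in> borel_measurable haar"
    unfolding fibre_sum_def by (intro borel_measurable_sum borel_measurable_times
      borel_measurable_const fun_of_chi_measurable)
  define h where "h y = f y * fibre_sum a s y / 2" for y
  have h: "h \<in> borel_measurable haar"
    unfolding h_def using borel_measurable_integrable[OF f] fibre_sum_measurable by measurable
  have "(\<integral>x. f (T2q a x) * cnj (chi s x) \<partial>haar) = (\<integral>x. h (T2q a x) \<partial>haar)"
    by (intro integral_cong_AE measurable_compose[OF T2q_measurable_haar h] borel_measurable_times
        fun_of_chi_measurable measurable_compose[OF T2q_measurable_haar borel_measurable_integrable[OF f]])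
       (use AE_haar_Z2 in \<open>auto simp: h_def fibre_sum_T2q a s elim!: eventually_mono\<close>)
  also have "\<dots> = (\<integral>y. (2 * indicator (parity_class a) y :: real) *\<^sub>R h y \<partial>haar)"
    by (rule integral_comp_T2q(1)[OF a h])
  also have "\<dots> = (\<integral>y. f y * fibre_sum a s y \<partial>haar)"
  proof (rule integral_cong_AE)
    show "AE y in haar. (2 * indicator (parity_class a) y :: real) *\<^sub>R h y = f y * fibre_sum a s y"
      using AE_haar_Z2 by eventually_elim
        (auto simp: h_def indicator_def fibre_sum_outside_parity_class[OF _ a s] scaleR_conv_of_real)
  qed (use h fibre_sum_measurable borel_measurable_integrable[OF f] parity_class_in_sets in
      \<open>auto intro!: borel_measurable_times borel_measurable_scaleR borel_measurable_indicator\<close>)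
  also have "\<dots> = (\<integral>y. (\<Sum>r\<in>{preim0 s, preim1 s}. chi r (z2_neg a) * (f y * cnj (chi r y))) \<partial>haar)"
    by (simp add: fibre_sum_def sum_distrib_left mult_ac)
  also have "\<dots> = (\<Sum>r\<in>{preim0 s, preim1 s}. chi r (z2_neg a) * (\<integral>y. f y * cnj (chi r y) \<partial>haar))"
    by (simp add: integrable_mult_cnj_chi[OF f])
  finally show ?thesis .
qed

section \<open>The transfer operator\<close>

lemma Lop_eq_sum_T2q: "Lop g = (\<lambda>x. \<Sum>j<3. coef j * g (T2q (z2_mul (z2_const (int j)) z2_q) x))"
  by (simp add: fun_eq_iff Lop_def T2q_def)

lemma integrable_Lop: "integrable haar g \<Longrightarrow> integrable haar (Lop g)"
  unfolding Lop_eq_sum_T2q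
  by (intro Bochner_Integration.integrable_sum integrable_mult_right integral_comp_T2q(2)) auto

lemma fourier_Lop:
  assumes g: "integrable haar g" and s: "s \<in> Xhat"
  shows "fourier (Lop g) s = (\<Sum>t\<in>{t \<in> Xhat. P2q t = s}. Mfun t * fourier g t)"
proof -
  let ?T = "\<lambda>j. T2q (z2_mul (z2_const (int j)) z2_q)"
  have "fourier (Lop g) s = (\<integral>x. (\<Sum>j<3. coef j * (g (?T j x) * cnj (chi s x))) \<partial>haar)"
    unfolding fourier_def Lop_eq_sum_T2q by (simp add: sum_distrib_right mult.assoc)
  also have "\<dots> = (\<Sum>j<3. (\<integral>x. coef j * (g (?T j x) * cnj (chi s x)) \<partial>haar))"
  proof (rule Bochner_Integration.integral_sum)
    fix j
    show "integrable haar (\<lambda>x. coef j * (g (?T j x) * cnj (chi s x)))"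
      using borel_measurable_integrable[OF g]
      by (intro integrable_mult_right integrable_mult_cnj_chi integral_comp_T2q(2) g) simp_all
  qed
  also have "\<dots> = (\<Sum>j<3. coef j * (\<integral>x. g (?T j x) * cnj (chi s x) \<partial>haar))"
    by simp
  also have "\<dots> = (\<Sum>j<3. coef j * (\<Sum>r\<in>{preim0 s, preim1 s}.
      chi r (z2_neg (z2_mul (z2_const (int j)) z2_q)) * fourier g r))"
    by (simp add: integral_T2q_mult_cnj_chi[OF _ s g] fourier_def)
  also have "\<dots> = (\<Sum>r\<in>{preim0 s, preim1 s}. Mfun r * fourier g r)"
    by (simp add: Mfun_def sum_distrib_left sum_distrib_right mult.assoc sum.swap[where A = "{..<3::nat}"])
  finally show ?thesis by (simp add: P2q_preimage[OF s])
qed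

lemma funpow_transfer_formula:
  fixes L :: "'f \<Rightarrow> 'f" and F :: "'f \<Rightarrow> 'a \<Rightarrow> 'b::comm_semiring_1" and P :: "'a \<Rightarrow> 'a"
  assumes L_closed: "\<And>g. g \<in> C \<Longrightarrow> L g \<in> C"
    and P_closed: "\<And>t. t \<in> X \<Longrightarrow> P t \<in> X"
    and finite_fibres: "\<And>s. s \<in> X \<Longrightarrow> finite {t \<in> X. P t = s}"
    and transfer: "\<And>g s. g \<in> C \<Longrightarrow> s \<in> X \<Longrightarrow> F (L g) s = (\<Sum>t\<in>{t \<in> X. P t = s}. M t * F g t)"
    and "g \<in> C" and "s \<in> X"
  shows "finite {r \<in> X. (P ^^ k) r = s} \<and>
    F ((L ^^ k) g) s = (\<Sum>r\<in>{r \<in> X. (P ^^ k) r = s}. (\<Prod>l<k. M ((P ^^ l) r)) * F g r)"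
  using \<open>s \<in> X\<close>
proof (induction k arbitrary: s)
  case 0
  then have "{r \<in> X. (P ^^ 0) r = s} = {s}" by auto
  then show ?case by simp
next
  case (Suc k)
  define R where "R = {t \<in> X. P t = s}"
  define B where "B t = {r \<in> X. (P ^^ k) r = t}" for t
  have "(P ^^ k) r \<in> X" if "r \<in> X" for r
    using that by (induction k) (auto intro: P_closed)
  then have fibre_union: "{r \<in> X. (P ^^ Suc k) r = s} = (\<Union>t\<in>R. B t)"
    unfolding R_def B_def by auto
  have "(L ^^ k) g \<in> C" using \<open>g \<in> C\<close> by (induction k) (auto intro: L_closed)
  then have "F ((L ^^ Suc k) g) s = (\<Sum>t\<in>R. M t * F ((L ^^ k) g) t)"
    using transfer Suc.prems by (simp add: R_def)
  also have "\<dots> = (\<Sum>t\<in>R. \<Sum>r\<in>B t. (\<Prod>l<Suc k. M ((P ^^ l) r)) * F g r)"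
    using Suc.IH by (intro sum.cong refl) (auto simp: R_def B_def sum_distrib_left mult_ac)
  finally have "F ((L ^^ Suc k) g) s = (\<Sum>t\<in>R. \<Sum>r\<in>B t. (\<Prod>l<Suc k. M ((P ^^ l) r)) * F g r)" .
  moreover have "finite R" using finite_fibres[OF Suc.prems] by (simp add: R_def)
  moreover have "\<forall>t\<in>R. finite (B t)" using Suc.IH by (simp add: R_def B_def)
  moreover have "\<forall>t\<in>R. \<forall>t'\<in>R. t \<noteq> t' \<longrightarrow> B t \<inter> B t' = {}" by (auto simp: B_def)
  ultimately show ?case
    unfolding fibre_union by (simp add: sum.UNION_disjoint)
qed

lemma norm_square_integrable_imp_integrable:
  fixes f :: "'a \<Rightarrow> 'b::{banach, second_countable_topology}"
  assumes "finite_measure M" and "f \<in> borel_measurable M" and "integrable M (\<lambda>x. (norm (f x))\<^sup>2)"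
  shows "integrable M f"
proof -
  have "(\<lambda>x. norm (f x)) \<in> borel_measurable M" using assms(2) by measurable
  then have "integrable M (\<lambda>x. norm (f x))"
    using finite_measure.square_integrable_imp_integrable[OF assms(1)] assms(3) by blast
  then show ?thesis using assms(2) by (simp add: integrable_norm_iff)
qed

theorem lemma23:
  fixes \<delta> :: "z2 \<Rightarrow> complex" and k :: nat and s :: rat
  assumes "\<delta> \<in> borel_measurable haar"
    and "integrable haar (\<lambda>x. (cmod (\<delta> x))\<^sup>2)"
    and "k \<ge> 1"
    and "s \<in> Xhat"
  shows "finite {r \<in> Xhat. (Pmap z2_2q ^^ k) r = s} \<and>
         fourier ((Lop ^^ k) \<delta>) s =
           (\<Sum>r \<in> {r \<in> Xhat. (Pmap z2_2q ^^ k) r = s}. Mk k r * fourier \<delta> r)"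
proof -
  have "integrable haar \<delta>"
    using norm_square_integrable_imp_integrable[OF _ assms(1,2)] prob_space_haar
    by (simp add: prob_space_def)
  then show ?thesis
    unfolding Mk_def
    by (intro funpow_transfer_formula[where C = "{g. integrable haar g}"])
       (auto simp: integrable_Lop Pmap_in_Xhat P2q_preimage fourier_Lop assms(4))
qed

end
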